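(* Let $X$ be a point set that is a semi-permutation in reduced form. Then $\mathrm{opt}(X)\ge |X|/4-1$.
   Context: Points have integer coordinates. Two points are collinear if they share an $x$- or $y$-coordinate; for non-collinear $p,q$, $\square_{p,q}$ is the smallest closed axis-parallel rectangle containing both; the pair is satisfied in $S$ if some $r\in S\setminus\{p,q\}$ lies in $\square_{p,q}$; $S$ is satisfied if all its non-collinear pairs are. $X$ is a semi-permutation if every horizontal line containing a point of $X$ contains exactly one. $\mathrm{opt}(X)$ is the minimum $|Y|$ with $X\cup Y$ satisfied. Writing $X=\{p_1,\dots,p_m\}$ with $p_1.y<\dots<p_m.y$, $p_i$ ($1<i<m$) is redundant if $p_{i-1}.x=p_i.x=p_{i+1}.x$; $X$ is in reduced form if it has no redundant points. *)

theory Defs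
  imports Complex_Main
begin

type_synonym point = "int \<times> int"

definition collinear :: "point \<Rightarrow> point \<Rightarrow> bool" where
  "collinear p q \<longleftrightarrow> fst p = fst q \<or> snd p = snd q"

definition box :: "point \<Rightarrow> point \<Rightarrow> point set" where
  "box p q = {r. min (fst p) (fst q) \<le> fst r \<and> fst r \<le> max (fst p) (fst q)
              \<and> min (snd p) (snd q) \<le> snd r \<and> snd r \<le> max (snd p) (snd q)}"

definition pair_satisfied :: "point set \<Rightarrow> point \<Rightarrow> point \<Rightarrow> bool" where
  "pair_satisfied S p q \<longleftrightarrow> (\<exists>r \<in> S - {p, q}. r \<in> box p q)"

definition satisfied :: "point set \<Rightarrow> bool" where
  "satisfied S \<longleftrightarrow> (\<forall>p\<in>S. \<forall>q\<in>S. \<not> collinear p q \<longrightarrow> pair_satisfied S p q)"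

definition semi_permutation :: "point set \<Rightarrow> bool" where
  "semi_permutation X \<longleftrightarrow> (\<forall>p\<in>X. \<forall>q\<in>X. snd p = snd q \<longrightarrow> p = q)"

definition opt :: "point set \<Rightarrow> nat" where
  "opt X = (LEAST n. \<exists>Y. finite Y \<and> card Y = n \<and> satisfied (X \<union> Y))"

definition redundant :: "point set \<Rightarrow> point \<Rightarrow> bool" where
  "redundant X p \<longleftrightarrow> p \<in> X \<and> (\<exists>q\<in>X. \<exists>r\<in>X.
      snd q < snd p \<and> snd p < snd r
      \<and> \<not> (\<exists>s\<in>X. snd q < snd s \<and> snd s < snd p)
      \<and> \<not> (\<exists>s\<in>X. snd p < snd s \<and> snd s < snd r)
      \<and> fst q = fst p \<and> fst p = fst r)"

definition reduced_form :: "point set \<Rightarrow> bool" where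
  "reduced_form X \<longleftrightarrow> (\<forall>p\<in>X. \<not> redundant X p)"

end

theory Submission
  imports Defs
begin

text \<open>Take three points of X that are consecutive in y-order. Since X is in reduced form they do
  not all lie on one vertical line, so one of the two consecutive pairs is non-collinear, and the
  point satisfying that pair cannot belong to X: it lies in Y, in the y-range spanned by the
  triple. Cutting X into disjoint triples of consecutive points therefore forces at least
  \<open>\<lfloor>|X|/3\<rfloor> \<ge> |X|/4 - 1\<close> points of Y.\<close>

lemma satisfied_grid: "satisfied (A \<times> B)"
  unfolding satisfied_def
proof (intro ballI impI)
  fix p q assume "p \<in> A \<times> B" "q \<in> A \<times> B" and "\<not> collinear p q"
  then have "(fst p, snd q) \<in> A \<times> B - {p, q}" "(fst p, snd q) \<in> box p q"
    by (auto simp: collinear_def box_def prod_eq_iff mem_Times_iff)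
  then show "pair_satisfied (A \<times> B) p q"
    unfolding pair_satisfied_def by blast
qed

lemma opt_attained:
  assumes "finite X"
  obtains Y where "finite Y" "card Y = opt X" "satisfied (X \<union> Y)"
proof -
  let ?G = "fst ` X \<times> snd ` X"
  have "X \<union> ?G = ?G"
    by force
  then have "\<exists>Y. finite Y \<and> card Y = card ?G \<and> satisfied (X \<union> Y)"
    using assms satisfied_grid by (metis finite_SigmaI finite_imageI)
  then have "\<exists>Y. finite Y \<and> card Y = opt X \<and> satisfied (X \<union> Y)"
    unfolding opt_def by (rule LeastI)
  then show ?thesis
    using that by blast
qed

definition y_adjacent :: "point set \<Rightarrow> point \<Rightarrow> point \<Rightarrow> bool" where
  "y_adjacent X p q \<longleftrightarrow> p \<in> X \<and> q \<in> X \<and> snd p < snd q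
     \<and> \<not> (\<exists>s\<in>X. snd p < snd s \<and> snd s < snd q)"

lemma redundant_iff_y_adjacent:
  "redundant X q \<longleftrightarrow>
     (\<exists>p r. y_adjacent X p q \<and> y_adjacent X q r \<and> fst p = fst q \<and> fst q = fst r)"
  unfolding redundant_def y_adjacent_def by blast

lemma y_adjacent_pair_hits:
  assumes "semi_permutation X" "satisfied (X \<union> Y)"
    and "y_adjacent X p q" "fst p \<noteq> fst q"
  shows "\<exists>r\<in>Y. snd p \<le> snd r \<and> snd r \<le> snd q"
proof -
  have pq: "p \<in> X" "q \<in> X" "snd p < snd q"
    using assms(3) by (auto simp: y_adjacent_def)
  then have "\<not> collinear p q"
    using assms(4) by (simp add: collinear_def)
  then obtain r where r: "r \<in> X \<union> Y" "r \<noteq> p" "r \<noteq> q" "r \<in> box p q"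
    using assms(2) pq unfolding satisfied_def pair_satisfied_def by blast
  then have between: "snd p \<le> snd r" "snd r \<le> snd q"
    using pq by (auto simp: box_def)
  have "r \<notin> X"
  proof
    assume "r \<in> X"
    then have "\<not> (snd p < snd r \<and> snd r < snd q)"
      using assms(3) unfolding y_adjacent_def by blast
    then have "snd r = snd p \<or> snd r = snd q"
      using between by linarith
    then show False
      using \<open>r \<in> X\<close> pq r(2,3) assms(1) by (auto simp: semi_permutation_def)
  qed
  then show ?thesis
    using r(1) between by blast
qed

lemma y_adjacent_triple_hits:
  assumes "semi_permutation X" "reduced_form X" "satisfied (X \<union> Y)"
    and "y_adjacent X p q" "y_adjacent X q s"
  shows "\<exists>r\<in>Y. snd p \<le> snd r \<and> snd r \<le> snd s"
proof -
  have "\<not> redundant X q"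
    using assms(2,4) by (simp add: reduced_form_def y_adjacent_def)
  then have "fst p \<noteq> fst q \<or> fst q \<noteq> fst s"
    using assms(4,5) redundant_iff_y_adjacent by blast
  moreover have "snd p < snd q" "snd q < snd s"
    using assms(4,5) by (simp_all add: y_adjacent_def)
  ultimately show ?thesis
    using y_adjacent_pair_hits[OF assms(1,3) assms(4)] y_adjacent_pair_hits[OF assms(1,3) assms(5)]
    by (meson order.trans less_imp_le)
qed

lemma sorted_wrt_less_nothing_between:
  fixes ys :: "'a::linorder list"
  assumes "sorted_wrt (<) ys" "Suc i < length ys" "x \<in> set ys"
  shows "\<not> (ys ! i < x \<and> x < ys ! Suc i)"
proof -
  obtain k where k: "k < length ys" "x = ys ! k"
    using assms(3) by (metis in_set_conv_nth)
  have "sorted ys"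
    using assms(1) by (rule strict_sorted_imp_sorted)
  then have "x \<le> ys ! i \<or> ys ! Suc i \<le> x"
    using k assms(2) by (metis not_less_eq_eq sorted_nth_mono Suc_lessD)
  then show ?thesis
    by auto
qed

lemma card_ge_windows_hit:
  fixes ys :: "'b::linorder list" and f :: "'a \<Rightarrow> 'b"
  assumes "finite Y" "sorted_wrt (<) ys"
    and hit: "\<And>i. i + 2 < length ys \<Longrightarrow> \<exists>r\<in>Y. ys ! i \<le> f r \<and> f r \<le> ys ! (i + 2)"
  shows "length ys div 3 \<le> card Y"
proof -
  let ?K = "{..<length ys div 3}"
  have "\<forall>k\<in>?K. \<exists>r\<in>Y. ys ! (3 * k) \<le> f r \<and> f r \<le> ys ! (3 * k + 2)"
    using hit by auto
  then obtain sel where sel: "\<And>k. k \<in> ?K \<Longrightarrow>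
      sel k \<in> Y \<and> ys ! (3 * k) \<le> f (sel k) \<and> f (sel k) \<le> ys ! (3 * k + 2)"
    by metis
  have "strict_mono_on ?K (f \<circ> sel)"
  proof (rule strict_mono_onI)
    fix a b assume "a \<in> ?K" "b \<in> ?K" "a < b"
    moreover from this have "ys ! (3 * a + 2) < ys ! (3 * b)"
      using sorted_wrt_nth_less[OF assms(2)] by simp
    ultimately show "(f \<circ> sel) a < (f \<circ> sel) b"
      using sel[of a] sel[of b] by fastforce
  qed
  then have "inj_on sel ?K"
    by (metis strict_mono_on_imp_inj_on inj_on_imageI2)
  then have "card ?K \<le> card Y"
    using sel assms(1) by (intro card_inj_on_le) auto
  then show ?thesis
    by simp
qed

lemma y_adjacent_nth_sorted:
  assumes "finite X"
  defines "ys \<equiv> sorted_list_of_set (snd ` X)"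
  assumes i: "Suc i < length ys"
  shows "\<exists>p q. snd p = ys ! i \<and> snd q = ys ! Suc i \<and> y_adjacent X p q"
proof -
  have sorted: "sorted_wrt (<) ys" and set_ys: "set ys = snd ` X"
    using assms(1) by (simp_all add: ys_def)
  obtain p where "p \<in> X" "snd p = ys ! i"
    using set_ys nth_mem[OF Suc_lessD[OF i]] by (metis imageE)
  moreover obtain q where "q \<in> X" "snd q = ys ! Suc i"
    using set_ys nth_mem[OF i] by (metis imageE)
  moreover have "ys ! i < ys ! Suc i"
    using sorted_wrt_nth_less[OF sorted] i by simp
  moreover have "\<not> (ys ! i < snd s \<and> snd s < ys ! Suc i)" if "s \<in> X" for s
    using sorted_wrt_less_nothing_between[OF sorted i] that set_ys by blast
  ultimately have "y_adjacent X p q"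
    unfolding y_adjacent_def by simp
  then show ?thesis
    using \<open>snd p = ys ! i\<close> \<open>snd q = ys ! Suc i\<close> by blast
qed

lemma y_windows_hit:
  assumes "finite X" "semi_permutation X" "reduced_form X" "satisfied (X \<union> Y)"
  defines "ys \<equiv> sorted_list_of_set (snd ` X)"
  assumes i: "i + 2 < length ys"
  shows "\<exists>r\<in>Y. ys ! i \<le> snd r \<and> snd r \<le> ys ! (i + 2)"
proof -
  obtain p q where pq: "snd p = ys ! i" "snd q = ys ! Suc i" "y_adjacent X p q"
    using y_adjacent_nth_sorted[OF assms(1)] i unfolding ys_def by fastforce
  obtain q' s where q's: "snd q' = ys ! Suc i" "snd s = ys ! (i + 2)" "y_adjacent X q' s"
    using y_adjacent_nth_sorted[OF assms(1), of "Suc i"] i unfolding ys_def by auto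
  have "q' = q"
    using pq q's assms(2) by (auto simp: semi_permutation_def y_adjacent_def)
  then show ?thesis
    using y_adjacent_triple_hits[OF assms(2-4)] pq q's by metis
qed

lemma card_div_3_le_opt:
  assumes "finite X" "semi_permutation X" "reduced_form X"
  shows "card X div 3 \<le> opt X"
proof -
  obtain Y where Y: "finite Y" "card Y = opt X" "satisfied (X \<union> Y)"
    using opt_attained[OF assms(1)] .
  define ys where "ys = sorted_list_of_set (snd ` X)"
  have "inj_on snd X"
    using assms(2) by (auto simp: semi_permutation_def inj_on_def)
  then have "length ys = card X"
    by (simp add: ys_def card_image)
  moreover have "length ys div 3 \<le> card Y"
    using Y(1) y_windows_hit[OF assms Y(3)] unfolding ys_def
    by (intro card_ge_windows_hit) auto
  ultimately show ?thesis
    using Y(2) by simp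
qed

theorem lemma6p5:
  fixes X :: "point set"
  assumes "finite X" and "semi_permutation X" and "reduced_form X"
  shows "real (opt X) \<ge> real (card X) / 4 - 1"
proof -
  have "card X div 3 \<le> opt X"
    using card_div_3_le_opt[OF assms] .
  moreover have "card X \<le> 3 * (card X div 3) + 2"
    by linarith
  ultimately have "real (card X) \<le> 3 * real (opt X) + 2"
    by linarith
  then show ?thesis
    by linarith
qed

end
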